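(* Let $c$ be continuous and bounded on $[0,\infty)\times\mathbb{R}$ and let $v_0$ be continuous on $\mathbb{R}$ and vanishing at infinity. Fix $t>0$ and an integer $n\ge1$, and let $v_n^{(t)}$ be the function on $[0,t]\times\mathbb{R}$ constructed as follows. Set $\tau_k=\frac{kt}{2n}$, $k=0,\dots,2n$, and $v_n^{(t)}(0,\cdot)=v_0$; for $k=0,\dots,n-1$, define inductively $$v_n^{(t)}(\tau,x)=\big(U_{2(\tau-\tau_{2k})}v_n^{(t)}(\tau_{2k},\cdot)\big)(x)\quad\text{for }\tau\in[\tau_{2k},\tau_{2k+1}],$$ $$v_n^{(t)}(\tau,x)=e^{-2c(\tau_{2k+2},x)(\tau-\tau_{2k+1})}\,v_n^{(t)}(\tau_{2k+1},x)\quad\text{for }\tau\in[\tau_{2k+1},\tau_{2k+2}],$$ where $U_0$ is the identity and, for $s>0$, $$(U_sf)(x)=\int_{\mathbb{R}}\frac{1}{\sqrt{2\pi\,\mathrm{sh}(2s)}}\exp\Big(-\frac12\Big((x^2+z^2)\frac{\mathrm{ch}(2s)}{\mathrm{sh}(2s)}-\frac{2xz}{\mathrm{sh}(2s)}\Big)\Big)f(z)\,dz.$$ Then for all real $x$, with the convention $\sigma_0=0$, $$\begin{aligned}v_n^{(t)}(t,x)=\int_{\mathbb{R}^n}&(2\pi\,\mathrm{sh}(2t/n))^{-n/2}\,v_0\Big(\sigma_n+\frac{x}{\mathrm{ch}(2t/n)^n}\Big)\exp\Big(-\frac12\frac{\mathrm{ch}(2t/n)}{\mathrm{sh}(2t/n)}\sum_{j=1}^n\Big(\sigma_{n-j+1}-\frac{\sigma_{n-j}}{\mathrm{ch}(2t/n)}\Big)^2\Big)\\&\exp\Big(-\frac12\frac{\mathrm{sh}(2t/n)}{\mathrm{ch}(2t/n)}\sum_{j=1}^n\Big(\sigma_{n-j}+\frac{x}{\mathrm{ch}(2t/n)^{n-j}}\Big)^2\Big)\exp\Big(-\frac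 tn\sum_{j=1}^n c\Big(\frac{jt}{n},\sigma_{n-j}+\frac{x}{\mathrm{ch}(2t/n)^{n-j}}\Big)\Big)\,d\sigma_1\cdots d\sigma_n.\end{aligned}$$
   Context: $\mathrm{ch}$ and $\mathrm{sh}$ denote the hyperbolic cosine and sine. The operators $U_s$ (Mehler's formula) form the heat semigroup of the harmonic oscillator $-\partial_x^2+x^2$. *)

theory Defs
  imports "HOL-Analysis.Analysis"
begin

definition mehler_kernel :: "real \<Rightarrow> real \<Rightarrow> real \<Rightarrow> real" where
  "mehler_kernel s x z =
     1 / sqrt (2 * pi * sinh (2 * s)) *
     exp (- (1/2) * ((x\<^sup>2 + z\<^sup>2) * cosh (2 * s) / sinh (2 * s) - 2 * x * z / sinh (2 * s)))"

definition U :: "real \<Rightarrow> (real \<Rightarrow> real) \<Rightarrow> real \<Rightarrow> real" where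
  "U s f x = (if s = 0 then f x else (LINT z|lborel. mehler_kernel s x z * f z))"

definition tau :: "real \<Rightarrow> nat \<Rightarrow> nat \<Rightarrow> real" where
  "tau t n k = real k * t / (2 * real n)"

text \<open>Value of v_n^(t) at time tau_{2k}.\<close>
primrec vgrid :: "(real \<Rightarrow> real) \<Rightarrow> (real \<Rightarrow> real \<Rightarrow> real) \<Rightarrow> real \<Rightarrow> nat \<Rightarrow> nat \<Rightarrow> real \<Rightarrow> real" where
  "vgrid v0 c t n 0 = v0"
| "vgrid v0 c t n (Suc k) = (\<lambda>x.
     exp (- 2 * c (tau t n (2*k+2)) x * (tau t n (2*k+2) - tau t n (2*k+1))) *
     U (2 * (tau t n (2*k+1) - tau t n (2*k))) (vgrid v0 c t n k) x)"

definition vn :: "(real \<Rightarrow> real) \<Rightarrow> (real \<Rightarrow> real \<Rightarrow> real) \<Rightarrow> real \<Rightarrow> nat \<Rightarrow> real \<Rightarrow> real \<Rightarrow> real" where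
  "vn v0 c t n s x =
     (let k = min (n - 1) (nat \<lfloor>s * real n / t\<rfloor>) in
      if s \<le> tau t n (2*k+1)
      then U (2 * (s - tau t n (2*k))) (vgrid v0 c t n k) x
      else exp (- 2 * c (tau t n (2*k+2)) x * (s - tau t n (2*k+1))) *
           U (2 * (tau t n (2*k+1) - tau t n (2*k))) (vgrid v0 c t n k) x)"

end

theory Submission
  imports Defs "HOL-Probability.Probability"
begin

text \<open>
  One Trotter step of length \<open>h = t/n\<close> maps \<open>g\<close> to \<open>e\<^sup>-\<^sup>h\<^sup>c U\<^sub>h g\<close>. With \<open>a = ch(2h)\<close>,
  \<open>b = sh(2h)\<close> and \<open>a\<^sup>2 - b\<^sup>2 = 1\<close>, the Mehler kernel factors as
  \<open>K\<^sub>h(y, z) = (2\<pi>b)\<^sup>-\<^sup>1\<^sup>/\<^sup>2 exp(-a/(2b) (z - y/a)\<^sup>2) exp(-b/(2a) y\<^sup>2)\<close>, a Gaussian in \<open>z\<close>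
  centred at \<open>y/a\<close> times a weight in \<open>y\<close>. Hence \<open>n\<close> steps give an \<open>n\<close>-fold integral over paths
  \<open>z\<^sub>0 = x, z\<^sub>1, \<dots>, z\<^sub>n\<close>, and the shift \<open>z\<^sub>i = \<sigma>\<^sub>i + x/a\<^sup>i\<close> turns the Gaussian factors into
  \<open>exp(-a/(2b) (\<sigma>\<^sub>i\<^sub>+\<^sub>1 - \<sigma>\<^sub>i/a)\<^sup>2)\<close>. The induction on the number of steps peels off the step
  applied first, which corresponds to integrating out the last path variable (Fubini). The
  integrand is dominated by the chain of these Gaussians, whose integral is \<open>(2\<pi>b/a)\<^sup>n\<^sup>/\<^sup>2\<close>.
\<close>


lemma has_bochner_integral_gaussian:
  fixes k \<mu> :: real
  assumes "k > 0"
  shows "has_bochner_integral lborel (\<lambda>w. exp (- (1/2) * k * (w - \<mu>)\<^sup>2)) (sqrt (2 * pi / k))"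
proof -
  have "(\<lambda>w. exp (- (1/2) * k * (w - \<mu>)\<^sup>2)) =
      (\<lambda>w. sqrt (2 * pi / k) * normal_density \<mu> (sqrt (1 / k)) w)"
    using assms by (simp add: fun_eq_iff normal_density_def real_sqrt_divide field_simps)
  moreover have "has_bochner_integral lborel (normal_density \<mu> (sqrt (1 / k))) 1"
    using assms by (simp add: has_bochner_integral_iff)
  ultimately show ?thesis
    using has_bochner_integral_mult_right[of "sqrt (2 * pi / k)" lborel "normal_density \<mu> (sqrt (1 / k))" 1]
    by simp
qed

lemma sum_atLeastAtMost_reflect:
  fixes F :: "nat \<Rightarrow> nat \<Rightarrow> 'a::comm_monoid_add"
  shows "(\<Sum>j=1..n. F j (n - j)) = (\<Sum>i<n. F (n - i) i)"
  by (rule sum.reindex_bij_witness[where i="\<lambda>i. n - i" and j="\<lambda>j. n - j"]) auto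

lemma bounded_range_vanishing_at_infinity:
  fixes f :: "'a::euclidean_space \<Rightarrow> 'b::real_normed_vector"
  assumes "continuous_on UNIV f" and "(f \<longlongrightarrow> 0) at_infinity"
  shows "bounded (range f)"
proof -
  obtain R where R: "\<And>y. R \<le> norm y \<Longrightarrow> norm (f y) < 1"
    using tendstoD[OF assms(2), of 1] unfolding eventually_at_infinity by auto
  have "bounded (f ` cball 0 R)"
    by (intro compact_imp_bounded compact_continuous_image continuous_on_subset[OF assms(1)]) auto
  moreover have "range f \<subseteq> f ` cball 0 R \<union> ball 0 1"
  proof
    fix z assume "z \<in> range f"
    then obtain y where "z = f y" by auto
    then show "z \<in> f ` cball 0 R \<union> ball 0 1"
      using R[of y] by (cases "R \<le> norm y") auto
  qed
  ultimately show ?thesis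
    by (metis bounded_Un bounded_ball bounded_subset)
qed


subsection \<open>The Mehler kernel\<close>

lemma mehler_kernel_factor:
  assumes "a = cosh (2 * h)" "b = sinh (2 * h)" "h \<noteq> 0"
  shows "mehler_kernel h y z =
    exp (- (1/2) * (a / b) * (z - y / a)\<^sup>2) * exp (- (1/2) * (b / a) * y\<^sup>2) / sqrt (2 * pi * b)"
proof -
  have a: "a > 0" and b: "b \<noteq> 0" and ab: "a\<^sup>2 = b\<^sup>2 + 1"
    using assms cosh_square_eq[of "2 * h"] by auto
  have e: "1 / (a * b) + b / a = a / b"
    using a b ab by (simp add: field_simps power2_eq_square)
      (metis distrib_right mult.assoc mult.commute mult_1)
  have "(a / b) * (z - y / a)\<^sup>2 + (b / a) * y\<^sup>2 = a / b * z\<^sup>2 - 2 * z * y / b + y\<^sup>2 * (1 / (a * b) + b / a)"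
    using a b by (simp add: field_simps power2_eq_square)
  also have "\<dots> = (y\<^sup>2 + z\<^sup>2) * a / b - 2 * y * z / b"
    unfolding e by (simp add: field_simps add_divide_distrib)
  finally have E: "(a / b) * (z - y / a)\<^sup>2 + (b / a) * y\<^sup>2 = (y\<^sup>2 + z\<^sup>2) * a / b - 2 * y * z / b" .
  show ?thesis
    unfolding mehler_kernel_def assms(1,2)[symmetric] E[symmetric]
    by (simp only: distrib_left exp_add mult.assoc) simp
qed

lemma borel_measurable_U [measurable]:
  assumes [measurable]: "g \<in> borel_measurable borel"
  shows "U h g \<in> borel_measurable borel"
proof -
  have "(\<lambda>y. LINT z|lborel. mehler_kernel h y z * g z) \<in> borel_measurable borel"
    by (rule lborel.borel_measurable_lebesgue_integral) (unfold mehler_kernel_def, measurable)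
  then show ?thesis
    by (cases "h = 0") (simp_all add: U_def[abs_def])
qed

lemma abs_U_le:
  assumes "h > 0" and [measurable]: "g \<in> borel_measurable borel" and g: "\<And>z. \<bar>g z\<bar> \<le> B"
  shows "\<bar>U h g y\<bar> \<le> B"
proof -
  define a where "a = cosh (2 * h)"
  define b where "b = sinh (2 * h)"
  have a: "a \<ge> 1" and b: "b > 0"
    using \<open>h > 0\<close> cosh_real_ge_1 by (auto simp: a_def b_def)
  have "B \<ge> 0"
    using g[of 0] by linarith
  define G where "G z = B / sqrt (2 * pi * b) * exp (- (1/2) * (a / b) * (z - y / a)\<^sup>2)" for z
  have G: "has_bochner_integral lborel G (B / sqrt (2 * pi * b) * sqrt (2 * pi / (a / b)))"
    unfolding G_def using a b by (intro has_bochner_integral_mult_right has_bochner_integral_gaussian) auto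
  have kernel_le: "\<bar>mehler_kernel h y z * g z\<bar> \<le> G z" for z
  proof -
    have "\<bar>mehler_kernel h y z * g z\<bar> =
        exp (- (1/2) * (a / b) * (z - y / a)\<^sup>2) * exp (- (1/2) * (b / a) * y\<^sup>2) / sqrt (2 * pi * b) * \<bar>g z\<bar>"
      using b \<open>h > 0\<close> by (simp add: mehler_kernel_factor[OF a_def b_def] abs_mult)
    also have "\<dots> \<le> exp (- (1/2) * (a / b) * (z - y / a)\<^sup>2) * 1 / sqrt (2 * pi * b) * B"
      using a b g[of z] by (intro mult_mono divide_right_mono) auto
    finally show ?thesis
      by (simp add: G_def ac_simps)
  qed
  have integrable: "integrable lborel (\<lambda>z. mehler_kernel h y z * g z)"
  proof (rule Bochner_Integration.integrable_bound[OF integrable.intros[OF G]])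
    show "(\<lambda>z. mehler_kernel h y z * g z) \<in> borel_measurable lborel"
      unfolding mehler_kernel_def by measurable
  qed (auto intro!: AE_I2 order_trans[OF kernel_le])
  have "\<bar>U h g y\<bar> = norm (LINT z|lborel. mehler_kernel h y z * g z)"
    using \<open>h > 0\<close> by (simp add: U_def)
  also have "\<dots> \<le> (LINT z|lborel. G z)"
    using integrable integrable.intros[OF G]
    by (rule Bochner_Integration.integral_norm_bound_integral) (simp add: kernel_le)
  also have "\<dots> = B / sqrt (2 * pi * b) * sqrt (2 * pi / (a / b))"
    using G by (simp add: has_bochner_integral_integral_eq)
  also have "\<dots> = B / sqrt a"
    using a b by (simp add: real_sqrt_divide real_sqrt_mult)
  also have "\<dots> \<le> B"
    using a \<open>B \<ge> 0\<close> by (simp add: divide_le_eq real_sqrt_ge_one mult_le_cancel_left1)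
  finally show ?thesis .
qed


subsection \<open>The Trotter iteration\<close>

primrec trotter :: "real \<Rightarrow> (real \<Rightarrow> real) \<Rightarrow> (nat \<Rightarrow> real \<Rightarrow> real) \<Rightarrow> nat \<Rightarrow> real \<Rightarrow> real" where
  "trotter h g cc 0 = g"
| "trotter h g cc (Suc k) = (\<lambda>x. exp (- h * cc (Suc k) x) * U h (trotter h g cc k) x)"

lemma trotter_Suc_shift:
  "trotter h g cc (Suc k) = trotter h (trotter h g cc 1) (\<lambda>j. cc (Suc j)) k"
  by (induction k) auto

lemma vgrid_eq_trotter:
  "vgrid v0 c t n k = trotter (t / real n) v0 (\<lambda>j. c (real j * t / real n)) k"
proof (induction k)
  case (Suc k)
  define q where "q = t / real n"
  have tau: "tau t n i = real i * q / 2" for i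
    by (simp add: tau_def q_def)
  have "tau t n (2 * k + 2) = real (Suc k) * q"
    and "tau t n (2 * k + 2) - tau t n (2 * k + 1) = q / 2"
    and "2 * (tau t n (2 * k + 1) - tau t n (2 * k)) = q"
    unfolding tau by (simp_all add: algebra_simps)
  then show ?case
    by (simp add: Suc.IH q_def ac_simps)
qed simp

lemma vn_final_time:
  assumes "n \<ge> 1" and "t > 0"
  shows "vn v0 c t n t x = vgrid v0 c t n n x"
proof -
  obtain k where n: "n = Suc k"
    using assms(1) by (cases n) auto
  have "min (n - 1) (nat \<lfloor>t * real n / t\<rfloor>) = k"
    using assms(2) n by simp
  moreover have "\<not> t \<le> tau t n (2 * k + 1)" and "tau t n (2 * k + 2) = t"
    using assms(2) n by (simp_all add: tau_def field_simps)
  ultimately show ?thesis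
    unfolding vn_def n by (simp add: Let_def)
qed


subsection \<open>Path integrals\<close>

definition pinned :: "(nat \<Rightarrow> real) \<Rightarrow> nat \<Rightarrow> real" where
  "pinned \<sigma> i = (if i = 0 then 0 else \<sigma> i)"

lemma pinned_upd:
  "i \<le> m \<Longrightarrow> pinned (\<sigma>(Suc m := w)) i = pinned \<sigma> i"
  "pinned (\<sigma>(Suc m := w)) (Suc m) = w"
  by (auto simp: pinned_def)

lemma borel_measurable_pinned [measurable]:
  "i \<le> m \<Longrightarrow> (\<lambda>\<sigma>. pinned \<sigma> i) \<in> borel_measurable (PiM {1..m} (\<lambda>_. lborel))"
  unfolding pinned_def by (cases "i = 0") auto

definition gaussian_chain :: "real \<Rightarrow> real \<Rightarrow> nat \<Rightarrow> (nat \<Rightarrow> real) \<Rightarrow> real" where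
  "gaussian_chain k a m \<sigma> = exp (- (1/2) * k * (\<Sum>i<m. (pinned \<sigma> (Suc i) - pinned \<sigma> i / a)\<^sup>2))"

lemma borel_measurable_gaussian_chain [measurable]:
  "gaussian_chain k a m \<in> borel_measurable (PiM {1..m} (\<lambda>_. lborel))"
  unfolding gaussian_chain_def[abs_def] by measurable

lemma gaussian_chain_nonneg [simp]: "gaussian_chain k a m \<sigma> \<ge> 0"
  by (simp add: gaussian_chain_def)

lemma gaussian_chain_Suc_upd:
  "gaussian_chain k a (Suc m) (\<sigma>(Suc m := w)) =
    gaussian_chain k a m \<sigma> * exp (- (1/2) * k * (w - pinned \<sigma> m / a)\<^sup>2)"
proof -
  have "(\<Sum>i<m. (pinned (\<sigma>(Suc m := w)) (Suc i) - pinned (\<sigma>(Suc m := w)) i / a)\<^sup>2) =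
      (\<Sum>i<m. (pinned \<sigma> (Suc i) - pinned \<sigma> i / a)\<^sup>2)"
    by (intro sum.cong) (auto simp: pinned_upd)
  then show ?thesis
    unfolding gaussian_chain_def by (simp add: pinned_upd exp_add[symmetric] algebra_simps)
qed

lemma nn_integral_gaussian_chain:
  assumes "k > 0"
  shows "(\<integral>\<^sup>+\<sigma>. gaussian_chain k a m \<sigma> \<partial>PiM {1..m} (\<lambda>_. lborel)) = ennreal (sqrt (2 * pi / k) ^ m)"
proof (induction m)
  case 0
  show ?case
    by (simp add: PiM_empty gaussian_chain_def)
next
  case (Suc m)
  interpret product_sigma_finite "\<lambda>_::nat. lborel :: real measure"
    by (simp add: product_sigma_finite_def sigma_finite_lborel)
  have gauss: "(\<integral>\<^sup>+w. exp (- (1/2) * k * (w - \<mu>)\<^sup>2) \<partial>lborel) = ennreal (sqrt (2 * pi / k))" for \<mu>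
    using has_bochner_integral_gaussian[OF assms, of \<mu>]
    by (simp add: has_bochner_integral_iff nn_integral_eq_integral)
  have ivl: "{1..Suc m} = insert (Suc m) {1..m}"
    by auto
  have "(\<integral>\<^sup>+\<sigma>. gaussian_chain k a (Suc m) \<sigma> \<partial>PiM {1..Suc m} (\<lambda>_. lborel)) =
      (\<integral>\<^sup>+\<sigma>. (\<integral>\<^sup>+w. gaussian_chain k a (Suc m) (\<sigma>(Suc m := w)) \<partial>lborel) \<partial>PiM {1..m} (\<lambda>_. lborel))"
    unfolding ivl
    by (rule product_nn_integral_insert) (use borel_measurable_gaussian_chain[of k a "Suc m"] ivl in auto)
  also have "\<dots> = (\<integral>\<^sup>+\<sigma>. gaussian_chain k a m \<sigma> * ennreal (sqrt (2 * pi / k)) \<partial>PiM {1..m} (\<lambda>_. lborel))"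
  proof (rule nn_integral_cong)
    fix \<sigma> :: "nat \<Rightarrow> real"
    have "(\<integral>\<^sup>+w. gaussian_chain k a (Suc m) (\<sigma>(Suc m := w)) \<partial>lborel) =
        (\<integral>\<^sup>+w. gaussian_chain k a m \<sigma> * ennreal (exp (- (1/2) * k * (w - pinned \<sigma> m / a)\<^sup>2)) \<partial>lborel)"
      by (simp add: gaussian_chain_Suc_upd ennreal_mult)
    also have "\<dots> = gaussian_chain k a m \<sigma> * ennreal (sqrt (2 * pi / k))"
      using gauss[of "pinned \<sigma> m / a"] by (simp add: nn_integral_cmult)
    finally show "(\<integral>\<^sup>+w. gaussian_chain k a (Suc m) (\<sigma>(Suc m := w)) \<partial>lborel) =
        gaussian_chain k a m \<sigma> * ennreal (sqrt (2 * pi / k))" .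
  qed
  also have "\<dots> = (\<integral>\<^sup>+\<sigma>. gaussian_chain k a m \<sigma> \<partial>PiM {1..m} (\<lambda>_. lborel)) * ennreal (sqrt (2 * pi / k))"
    by (rule nn_integral_multc) measurable
  also have "\<dots> = ennreal (sqrt (2 * pi / k) ^ Suc m)"
    unfolding Suc.IH using assms by (simp add: ennreal_mult[symmetric] mult.commute)
  finally show ?case .
qed

lemma integrable_gaussian_chain:
  "k > 0 \<Longrightarrow> integrable (PiM {1..m} (\<lambda>_. lborel)) (gaussian_chain k a m)"
  by (rule integrableI_nn_integral_finite[OF borel_measurable_gaussian_chain _ nn_integral_gaussian_chain])
    (auto simp: gaussian_chain_def)

text \<open>Here \<open>pinned \<sigma> i + x / a ^ i\<close> is the path point \<open>z\<^sub>i\<close>, and \<open>cc j\<close> is the potential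
  of the \<open>j\<close>-th step, which acts at \<open>z\<^sub>m\<^sub>-\<^sub>j\<close>.\<close>


definition trotter_integrand ::
    "real \<Rightarrow> real \<Rightarrow> real \<Rightarrow> (real \<Rightarrow> real) \<Rightarrow> (nat \<Rightarrow> real \<Rightarrow> real) \<Rightarrow> nat \<Rightarrow> real \<Rightarrow> (nat \<Rightarrow> real) \<Rightarrow> real" where
  "trotter_integrand h a b g cc m x \<sigma> =
     (2 * pi * b) powr (- (real m / 2)) * g (pinned \<sigma> m + x / a ^ m) * gaussian_chain (a / b) a m \<sigma> *
     exp (- (1/2) * (b / a) * (\<Sum>i<m. (pinned \<sigma> i + x / a ^ i)\<^sup>2)) *
     exp (- h * (\<Sum>i<m. cc (m - i) (pinned \<sigma> i + x / a ^ i)))"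

lemma abs_trotter_integrand_le:
  assumes a: "a > 0" and b: "b > 0" and h: "h \<ge> 0"
    and g: "\<And>y. \<bar>g y\<bar> \<le> B" and cc: "\<And>j y. \<bar>cc j y\<bar> \<le> C"
  shows "\<bar>trotter_integrand h a b g cc m x \<sigma>\<bar> \<le>
    (2 * pi * b) powr (- (real m / 2)) * B * exp (h * real m * C) * gaussian_chain (a / b) a m \<sigma>"
proof -
  let ?P = "(2 * pi * b) powr (- (real m / 2))"
  let ?E\<^sub>1 = "exp (- (1/2) * (b / a) * (\<Sum>i<m. (pinned \<sigma> i + x / a ^ i)\<^sup>2))"
  let ?E\<^sub>2 = "exp (- h * (\<Sum>i<m. cc (m - i) (pinned \<sigma> i + x / a ^ i)))"
  have "(\<Sum>i<m. - cc (m - i) (pinned \<sigma> i + x / a ^ i)) \<le> real m * C"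
    using sum_bounded_above[of "{..<m}" "\<lambda>i. - cc (m - i) (pinned \<sigma> i + x / a ^ i)" C] cc
    by (simp add: abs_le_iff)
  then have "h * (\<Sum>i<m. - cc (m - i) (pinned \<sigma> i + x / a ^ i)) \<le> h * (real m * C)"
    using h by (rule mult_left_mono)
  then have E\<^sub>2: "?E\<^sub>2 \<le> exp (h * real m * C)"
    by (simp add: sum_negf mult.assoc)
  have E\<^sub>1: "?E\<^sub>1 \<le> 1"
    using a b by (simp add: sum_nonneg)
  have "\<bar>trotter_integrand h a b g cc m x \<sigma>\<bar> =
      ?P * \<bar>g (pinned \<sigma> m + x / a ^ m)\<bar> * gaussian_chain (a / b) a m \<sigma> * ?E\<^sub>1 * ?E\<^sub>2"
    by (simp add: trotter_integrand_def abs_mult gaussian_chain_def)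
  also have "\<dots> \<le> ?P * B * gaussian_chain (a / b) a m \<sigma> * 1 * exp (h * real m * C)"
    using g[of "pinned \<sigma> m + x / a ^ m"] g[of 0] E\<^sub>1 E\<^sub>2
    by (intro mult_mono) (auto simp: gaussian_chain_def)
  finally show ?thesis
    by (simp add: ac_simps)
qed

lemma integrable_trotter_integrand:
  assumes a: "a > 0" and b: "b > 0" and h: "h \<ge> 0"
    and [measurable]: "g \<in> borel_measurable borel" "\<And>j. cc j \<in> borel_measurable borel"
    and g: "\<And>y. \<bar>g y\<bar> \<le> B" and cc: "\<And>j y. \<bar>cc j y\<bar> \<le> C"
  shows "integrable (PiM {1..m} (\<lambda>_. lborel)) (trotter_integrand h a b g cc m x)"
proof (rule Bochner_Integration.integrable_bound)
  define K where "K = (2 * pi * b) powr (- (real m / 2)) * B * exp (h * real m * C)"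
  show "integrable (PiM {1..m} (\<lambda>_. lborel)) (\<lambda>\<sigma>. K * gaussian_chain (a / b) a m \<sigma>)"
    using a b by (intro integrable_mult_right integrable_gaussian_chain) simp
  show "trotter_integrand h a b g cc m x \<in> borel_measurable (PiM {1..m} (\<lambda>_. lborel))"
    unfolding trotter_integrand_def[abs_def] by measurable
  have "\<bar>B\<bar> = B"
    using g[of 0] by simp
  then show "AE \<sigma> in PiM {1..m} (\<lambda>_. lborel).
      norm (trotter_integrand h a b g cc m x \<sigma>) \<le> norm (K * gaussian_chain (a / b) a m \<sigma>)"
    using abs_trotter_integrand_le[where g = g and cc = cc, OF a b h g cc]
    by (intro AE_I2) (simp add: K_def abs_mult)
qed

lemma trotter_integrand_reflect:
  "trotter_integrand h a b g cc m x \<sigma> =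
    (2 * pi * b) powr (- (real m / 2)) * g (pinned \<sigma> m + x / a ^ m) *
    exp (- (1/2) * (a / b) * (\<Sum>j=1..m. (pinned \<sigma> (m - j + 1) - pinned \<sigma> (m - j) / a)\<^sup>2)) *
    exp (- (1/2) * (b / a) * (\<Sum>j=1..m. (pinned \<sigma> (m - j) + x / a ^ (m - j))\<^sup>2)) *
    exp (- h * (\<Sum>j=1..m. cc j (pinned \<sigma> (m - j) + x / a ^ (m - j))))"
proof -
  have steps: "(\<Sum>j=1..m. (pinned \<sigma> (m - j + 1) - pinned \<sigma> (m - j) / a)\<^sup>2) =
      (\<Sum>i<m. (pinned \<sigma> (Suc i) - pinned \<sigma> i / a)\<^sup>2)"
    using sum_atLeastAtMost_reflect[of "\<lambda>_ i. (pinned \<sigma> (Suc i) - pinned \<sigma> i / a)\<^sup>2" m] by simp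
  have positions: "(\<Sum>j=1..m. (pinned \<sigma> (m - j) + x / a ^ (m - j))\<^sup>2) = (\<Sum>i<m. (pinned \<sigma> i + x / a ^ i)\<^sup>2)"
    by (rule sum_atLeastAtMost_reflect)
  have potential: "(\<Sum>j=1..m. cc j (pinned \<sigma> (m - j) + x / a ^ (m - j))) =
      (\<Sum>i<m. cc (m - i) (pinned \<sigma> i + x / a ^ i))"
    by (rule sum_atLeastAtMost_reflect)
  show ?thesis
    unfolding trotter_integrand_def gaussian_chain_def steps positions potential ..
qed

lemma trotter_integrand_Suc_upd:
  assumes ab: "a = cosh (2 * h)" "b = sinh (2 * h)" and h: "h > 0"
  shows "trotter_integrand h a b g cc (Suc m) x (\<sigma>(Suc m := w)) =
    trotter_integrand h a b (\<lambda>z. exp (- h * cc 1 z)) (\<lambda>j. cc (Suc j)) m x \<sigma> *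
    (mehler_kernel h (pinned \<sigma> m + x / a ^ m) (w + x / a ^ Suc m) * g (w + x / a ^ Suc m))"
proof -
  have b: "b > 0"
    using ab h by simp
  define y where "y = pinned \<sigma> m + x / a ^ m"
  define d where "d = x / a ^ Suc m"
  have powr_Suc: "(2 * pi * b) powr (- (real (Suc m) / 2)) =
      (2 * pi * b) powr (- (real m / 2)) * (2 * pi * b) powr (- (1 / 2))"
  proof -
    have "- (real (Suc m) / 2) = - (real m / 2) + - (1 / 2)"
      by (simp add: field_simps)
    then show ?thesis
      by (simp only: powr_add)
  qed
  have powr_half: "(2 * pi * b) powr (- (1 / 2)) = 1 / sqrt (2 * pi * b)"
    using b by (simp add: powr_minus_divide powr_half_sqrt)
  have squares: "(\<Sum>i<Suc m. (pinned (\<sigma>(Suc m := w)) i + x / a ^ i)\<^sup>2) =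
      (\<Sum>i<m. (pinned \<sigma> i + x / a ^ i)\<^sup>2) + y\<^sup>2"
    and potential: "(\<Sum>i<Suc m. cc (Suc m - i) (pinned (\<sigma>(Suc m := w)) i + x / a ^ i)) =
      (\<Sum>i<m. cc (Suc (m - i)) (pinned \<sigma> i + x / a ^ i)) + cc 1 y"
    by (simp_all add: y_def pinned_upd Suc_diff_le)
  have "w + d - y / a = w - pinned \<sigma> m / a"
    by (simp add: y_def d_def add_divide_distrib)
  then have kernel: "mehler_kernel h y (w + d) =
      exp (- (1/2) * (a / b) * (w - pinned \<sigma> m / a)\<^sup>2) * exp (- (1/2) * (b / a) * y\<^sup>2) / sqrt (2 * pi * b)"
    by (simp only: mehler_kernel_factor[OF ab not_sym[OF less_imp_neq[OF h]]])
  show ?thesis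
    unfolding trotter_integrand_def squares potential pinned_upd(2) kernel y_def[symmetric] d_def[symmetric]
      gaussian_chain_Suc_upd powr_Suc powr_half distrib_left exp_add
    by (simp only: divide_inverse mult_ac)
qed

lemma integral_trotter_integrand_last:
  assumes ab: "a = cosh (2 * h)" "b = sinh (2 * h)" and h: "h > 0"
  shows "(LINT w|lborel. trotter_integrand h a b g cc (Suc m) x (\<sigma>(Suc m := w))) =
    trotter_integrand h a b (trotter h g cc 1) (\<lambda>j. cc (Suc j)) m x \<sigma>"
proof -
  define y where "y = pinned \<sigma> m + x / a ^ m"
  define d where "d = x / a ^ Suc m"
  have "(LINT w|lborel. trotter_integrand h a b g cc (Suc m) x (\<sigma>(Suc m := w))) =
      trotter_integrand h a b (\<lambda>z. exp (- h * cc 1 z)) (\<lambda>j. cc (Suc j)) m x \<sigma> *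
      (LINT w|lborel. mehler_kernel h y (w + d) * g (w + d))"
    unfolding trotter_integrand_Suc_upd[OF ab h] y_def d_def by (rule integral_mult_right_zero)
  also have "(LINT w|lborel. mehler_kernel h y (w + d) * g (w + d)) = U h g y"
    using lborel_integral_real_affine[of 1 "\<lambda>z. mehler_kernel h y z * g z" d] h
    by (simp add: U_def add.commute)
  also have "trotter_integrand h a b (\<lambda>z. exp (- h * cc 1 z)) (\<lambda>j. cc (Suc j)) m x \<sigma> * U h g y =
      trotter_integrand h a b (trotter h g cc 1) (\<lambda>j. cc (Suc j)) m x \<sigma>"
    by (simp add: trotter_integrand_def y_def ac_simps)
  finally show ?thesis .
qed

lemma trotter_eq_integral:
  assumes ab: "a = cosh (2 * h)" "b = sinh (2 * h)" and h: "h > 0"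
    and "g \<in> borel_measurable borel" "\<And>y. \<bar>g y\<bar> \<le> B"
    and "\<And>j. cc j \<in> borel_measurable borel" "\<And>j y. \<bar>cc j y\<bar> \<le> C"
  shows "trotter h g cc m x = (LINT \<sigma>|PiM {1..m} (\<lambda>_. lborel). trotter_integrand h a b g cc m x \<sigma>)"
  using assms(4-)
proof (induction m arbitrary: g cc B)
  case 0
  have "b > 0"
    using ab h by simp
  then show ?case
    by (simp add: PiM_empty trotter_integrand_def gaussian_chain_def pinned_def)
next
  case (Suc m)
  interpret product_sigma_finite "\<lambda>_::nat. lborel :: real measure"
    by (simp add: product_sigma_finite_def sigma_finite_lborel)
  have a: "a > 0" and b: "b > 0"
    using ab h by auto
  note [measurable] = Suc.prems(1,3)
  have "\<bar>trotter h g cc 1 y\<bar> \<le> exp (h * C) * B" for y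
  proof -
    have "exp (- h * cc 1 y) \<le> exp (h * C)"
      using h Suc.prems(4)[of 1 y] mult_left_mono[of "- cc 1 y" C h] by (simp add: abs_le_iff)
    then show ?thesis
      using abs_U_le[OF h _ Suc.prems(2)] by (simp add: abs_mult mult_mono)
  qed
  then have "trotter h (trotter h g cc 1) (\<lambda>j. cc (Suc j)) m x =
      (LINT \<sigma>|PiM {1..m} (\<lambda>_. lborel). trotter_integrand h a b (trotter h g cc 1) (\<lambda>j. cc (Suc j)) m x \<sigma>)"
    using Suc.prems by (intro Suc.IH) auto
  also have "\<dots> = (LINT \<sigma>|PiM {1..m} (\<lambda>_. lborel).
      LINT w|lborel. trotter_integrand h a b g cc (Suc m) x (\<sigma>(Suc m := w)))"
    by (simp add: integral_trotter_integrand_last[OF ab h])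
  also have "\<dots> = (LINT \<sigma>|PiM (insert (Suc m) {1..m}) (\<lambda>_. lborel). trotter_integrand h a b g cc (Suc m) x \<sigma>)"
    using integrable_trotter_integrand[OF a b less_imp_le[OF h] Suc.prems(1,3,2,4), where m="Suc m" and x=x]
    by (intro product_integral_insert[symmetric]) (auto simp: atLeastAtMostSuc_conv)
  finally have "trotter h g cc (Suc m) x =
      (LINT \<sigma>|PiM (insert (Suc m) {1..m}) (\<lambda>_. lborel). trotter_integrand h a b g cc (Suc m) x \<sigma>)"
    by (simp only: trotter_Suc_shift)
  moreover have "{1..Suc m} = insert (Suc m) {1..m}"
    by auto
  ultimately show ?case
    by simp
qed


theorem proposition1:
  fixes c :: "real \<Rightarrow> real \<Rightarrow> real" and v0 :: "real \<Rightarrow> real"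
    and t :: real and n :: nat and x :: real
  assumes c_cont: "continuous_on ({0..} \<times> UNIV) (\<lambda>(s, y). c s y)"
    and c_bdd: "bounded ((\<lambda>(s, y). c s y) ` ({0..} \<times> UNIV))"
    and v0_cont: "continuous_on UNIV v0"
    and v0_vanish: "(v0 \<longlongrightarrow> 0) at_infinity"
    and t_pos: "t > 0" and n_pos: "n \<ge> 1"
  shows "vn v0 c t n t x =
    (LINT \<sigma>' | PiM {1..n} (\<lambda>_. lborel).
       (let \<sigma> = (\<lambda>j. if j = 0 then 0 else \<sigma>' j);
            a = cosh (2 * t / real n); b = sinh (2 * t / real n) in
        (2 * pi * b) powr (- (real n / 2)) *
        v0 (\<sigma> n + x / a ^ n) *
        exp (- (1/2) * (a / b) * (\<Sum>j=1..n. (\<sigma> (n - j + 1) - \<sigma> (n - j) / a)\<^sup>2)) *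
        exp (- (1/2) * (b / a) * (\<Sum>j=1..n. (\<sigma> (n - j) + x / a ^ (n - j))\<^sup>2)) *
        exp (- (t / real n) * (\<Sum>j=1..n. c (real j * t / real n) (\<sigma> (n - j) + x / a ^ (n - j))))))"
proof -
  define h where "h = t / real n"
  define cc where "cc j = c (real j * t / real n)" for j
  have h: "h > 0"
    using t_pos n_pos by (simp add: h_def)
  obtain B where B: "\<And>y. \<bar>v0 y\<bar> \<le> B"
    using bounded_range_vanishing_at_infinity[OF v0_cont v0_vanish] by (auto simp: bounded_iff)
  obtain C where C: "\<And>j y. \<bar>cc j y\<bar> \<le> C"
    using c_bdd t_pos by (fastforce simp: bounded_iff cc_def)
  have cc_meas: "cc j \<in> borel_measurable borel" for j
  proof -
    have "continuous_on UNIV (\<lambda>y. (\<lambda>(s, y). c s y) (real j * t / real n, y))"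
      using t_pos by (intro continuous_on_compose2[OF c_cont] continuous_intros) auto
    then show ?thesis
      unfolding cc_def by (intro borel_measurable_continuous_onI) simp
  qed
  have ab: "cosh (2 * t / real n) = cosh (2 * h)" "sinh (2 * t / real n) = sinh (2 * h)"
    by (simp_all add: h_def)
  have "vn v0 c t n t x = trotter h v0 cc n x"
    by (simp add: vn_final_time[OF n_pos t_pos] vgrid_eq_trotter h_def cc_def[abs_def])
  also have "\<dots> = (LINT \<sigma>|PiM {1..n} (\<lambda>_. lborel).
      trotter_integrand h (cosh (2 * t / real n)) (sinh (2 * t / real n)) v0 cc n x \<sigma>)"
    by (rule trotter_eq_integral[OF ab h borel_measurable_continuous_onI[OF v0_cont] B cc_meas C])
  finally show ?thesis
    by (rule trans) (intro Bochner_Integration.integral_cong refl,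
      simp only: trotter_integrand_reflect pinned_def Let_def h_def cc_def)
qed

end
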